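(* Let $P:\{-1,1\}^k\to\{0,1\}$ be a predicate such that there is no uniformly positively correlated probability distribution supported on $P^{-1}(1)$. Then there is a real polynomial $Q$ of degree at most $2$ in $x_1,\dots,x_k$ such that $Q(x)>E_Q^+$ for every $x\in P^{-1}(1)$. Furthermore, $Q$ can be chosen such that the maximum defining $E_Q^+$ is attained at a bias $r$ with $|r|<1$.
   Context: Boolean values are encoded as $\pm1$. For $Q:\{-1,1\}^k\to\mathbb{R}$ and $r\in[-1,1]$, $E_Q(r)=\mathbb{E}[Q(x)]$ where $x$ has independent coordinates each with expectation $r$ (i.e., $x_i=1$ with probability $(1+r)/2$), and $E_Q^+=\max_{r\in[-1,1]}E_Q(r)$. A distribution on $\{-1,1\}^k$ is uniformly positively correlated if there are $p,\rho\in[0,1]$ with $\rho\ge p^2$ such that $\Pr[x_i=1]=p$ for every $i$ and $\Pr[x_i=1\wedge x_j=1]=\rho$ for every $i<j$. *)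

theory Defs
  imports "HOL-Probability.Probability"
begin

text \<open>Points of the Boolean cube {-1,1}^k: coordinates indexed by 0..k-1,
  extended by 0 outside (so that the cube is a finite set of functions).\<close>
definition cube :: "nat \<Rightarrow> (nat \<Rightarrow> real) set" where
  "cube k = {x. (\<forall>i<k. x i = 1 \<or> x i = -1) \<and> (\<forall>i. k \<le> i \<longrightarrow> x i = 0)}"

definition unif_pos_corr :: "nat \<Rightarrow> (nat \<Rightarrow> real) pmf \<Rightarrow> bool" where
  "unif_pos_corr k \<mu> \<longleftrightarrow> set_pmf \<mu> \<subseteq> cube k \<and>
     (\<exists>p \<rho>. p \<in> {0..1} \<and> \<rho> \<in> {0..1} \<and> \<rho> \<ge> p^2 \<and>
        (\<forall>i<k. measure_pmf.prob \<mu> {x. x i = 1} = p) \<and>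
        (\<forall>i j. i < j \<and> j < k \<longrightarrow> measure_pmf.prob \<mu> {x. x i = 1 \<and> x j = 1} = \<rho>))"

definition quadpoly :: "nat \<Rightarrow> real \<Rightarrow> (nat \<Rightarrow> real) \<Rightarrow> (nat \<Rightarrow> nat \<Rightarrow> real) \<Rightarrow> (nat \<Rightarrow> real) \<Rightarrow> real" where
  "quadpoly k c a b x = c + (\<Sum>i<k. a i * x i) + (\<Sum>i<k. \<Sum>j<k. b i j * x i * x j)"

text \<open>E_Q(r): expectation of Q under independent coordinates of mean r,
  i.e. Pr[x_i = 1] = (1+r)/2.\<close>
definition EQ :: "nat \<Rightarrow> ((nat \<Rightarrow> real) \<Rightarrow> real) \<Rightarrow> real \<Rightarrow> real" where
  "EQ k Q r = (\<Sum>x\<in>cube k. (\<Prod>i<k. (1 + r * x i) / 2) * Q x)"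

definition EQplus :: "nat \<Rightarrow> ((nat \<Rightarrow> real) \<Rightarrow> real) \<Rightarrow> real" where
  "EQplus k Q = (SUP r\<in>{-1..1}. EQ k Q r)"

end

theory Submission
  imports Defs
begin

text \<open>Let \<open>S\<close> be the set of satisfying assignments. A distribution on \<open>S\<close> is uniformly
  positively correlated exactly when all its first moments equal some \<open>m\<close> and all its pairwise
  moments equal some \<open>c\<close> with \<open>m\<^sup>2 \<le> c \<le> 1\<close>. So the hypothesis says that the compact convex
  set of moment vectors of distributions on \<open>S\<close> misses the compact convex set of such uniform
  moment vectors. A separating hyperplane gives a form \<open>L x = \<Sum> a\<^sub>i x\<^sub>i + \<Sum> v\<^sub>i\<^sub>j x\<^sub>i x\<^sub>j\<close> and
  \<open>F > 0\<close> with \<open>L x \<ge> U m + V c + F\<close> for \<open>x \<in> S\<close>, where \<open>U = \<Sum> a\<^sub>i\<close> and \<open>V = \<Sum> v\<^sub>i\<^sub>j\<close>. As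
  \<open>E\<^sub>L(r) = U r + V r\<^sup>2\<close>, taking \<open>(m, c) = (r, r\<^sup>2)\<close> nearly gives the claim; subtracting a
  suitable multiple of \<open>\<Sum> x\<^sub>i x\<^sub>j\<close> makes \<open>E\<^sub>Q\<close> peak strictly inside \<open>(-1, 1)\<close> while \<open>Q\<close> stays
  above that peak on \<open>S\<close>.\<close>

lemma cube_0: "cube 0 = {\<lambda>_. 0}"
  by (auto simp: cube_def)

lemma cube_Suc: "cube (Suc k) = (\<lambda>(x, t). x(k := t)) ` (cube k \<times> {1, -1})"
proof (intro equalityI subsetI)
  fix y assume y: "y \<in> cube (Suc k)"
  then have "y(k := 0) \<in> cube k" "y k \<in> {1, -1}" by (auto simp: cube_def)
  then show "y \<in> (\<lambda>(x, t). x(k := t)) ` (cube k \<times> {1, -1})"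
    by (intro image_eqI[of _ _ "(y(k := 0), y k)"]) auto
qed (auto simp: cube_def less_Suc_eq)

lemma finite_cube: "finite (cube k)"
  by (induction k) (auto simp: cube_0 cube_Suc)

lemma cube_coord: "x \<in> cube k \<Longrightarrow> i < k \<Longrightarrow> x i = 1 \<or> x i = -1"
  by (auto simp: cube_def)

lemma sum_cube_Suc:
  "(\<Sum>x\<in>cube (Suc k). g x) = (\<Sum>x\<in>cube k. g (x(k := 1)) + g (x(k := -1)))"
proof -
  have "inj_on (\<lambda>(x, t). x(k := t)) (cube k \<times> {1, -1::real})"
  proof (rule inj_onI, clarify)
    fix x t x' t' assume x: "x \<in> cube k" "x' \<in> cube k" and eq: "x(k := t) = x'(k := t')"
    have "x i = x' i" for i
      using fun_cong[OF eq, of i] x by (cases "i = k") (auto simp: cube_def)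
    then show "x = x' \<and> t = t'" using fun_cong[OF eq, of k] by auto
  qed
  then have "(\<Sum>x\<in>cube (Suc k). g x) = (\<Sum>(x, t)\<in>cube k \<times> {1, -1}. g (x(k := t)))"
    unfolding cube_Suc by (subst sum.reindex) (auto simp: case_prod_beta)
  then show ?thesis by (simp add: sum.cartesian_product[symmetric])
qed

lemma sum_cube_prod:
  fixes f :: "nat \<Rightarrow> real \<Rightarrow> 'a :: comm_semiring_1"
  shows "(\<Sum>x\<in>cube k. \<Prod>i<k. f i (x i)) = (\<Prod>i<k. f i 1 + f i (-1))"
proof (induction k)
  case (Suc k)
  have "(\<Prod>i<Suc k. f i ((x(k := t)) i)) = (\<Prod>i<k. f i (x i)) * f k t" for x t
    by (simp add: prod.lessThan_Suc)
  then have "(\<Sum>x\<in>cube (Suc k). \<Prod>i<Suc k. f i (x i))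
      = (\<Sum>x\<in>cube k. (\<Prod>i<k. f i (x i)) * (f k 1 + f k (-1)))"
    by (simp add: sum_cube_Suc distrib_left)
  also have "\<dots> = (\<Prod>i<Suc k. f i 1 + f i (-1))"
    by (simp add: Suc.IH prod.lessThan_Suc flip: sum_distrib_right)
  finally show ?case .
qed (simp add: cube_0)

lemma EQ_prod:
  "EQ k (\<lambda>x. \<Prod>i<k. h i (x i)) r = (\<Prod>i<k. (1 + r) / 2 * h i 1 + (1 - r) / 2 * h i (-1))"
  (is "_ = ?rhs")
proof -
  have "EQ k (\<lambda>x. \<Prod>i<k. h i (x i)) r = (\<Sum>x\<in>cube k. \<Prod>i<k. (1 + r * x i) / 2 * h i (x i))"
    unfolding EQ_def prod.distrib ..
  also have "\<dots> = ?rhs"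
    by (subst sum_cube_prod) simp
  finally show ?thesis .
qed

lemma EQ_sum: "EQ k (\<lambda>x. \<Sum>j\<in>J. f j x) r = (\<Sum>j\<in>J. EQ k (f j) r)"
  unfolding EQ_def sum_distrib_left by (rule sum.swap)

lemma EQ_add: "EQ k (\<lambda>x. f x + g x) r = EQ k f r + EQ k g r"
  unfolding EQ_def by (simp add: distrib_left sum.distrib)

lemma EQ_cmult: "EQ k (\<lambda>x. c * f x) r = c * EQ k f r"
  unfolding EQ_def by (simp add: sum_distrib_left algebra_simps)

lemma EQ_const: "EQ k (\<lambda>_. c) r = c"
proof -
  have "EQ k (\<lambda>_. 1) r = 1"
    using EQ_prod[of k "\<lambda>_ _. 1" r] by (simp add: add_divide_distrib[symmetric])
  then show ?thesis using EQ_cmult[of k c "\<lambda>_. 1" r] by simp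
qed

lemma EQ_coord:
  assumes "i < k"
  shows "EQ k (\<lambda>x. x i) r = r"
proof -
  have "EQ k (\<lambda>x. x i) r = EQ k (\<lambda>x. \<Prod>l<k. if i = l then x l else 1) r"
    using assms by (simp add: prod.delta')
  also have "\<dots> = (\<Prod>l<k. if i = l then r else 1)"
    by (subst EQ_prod) (intro prod.cong refl, simp add: field_simps)
  also have "\<dots> = r"
    using assms by (simp add: prod.delta')
  finally show ?thesis .
qed

lemma EQ_coord_prod:
  assumes "i < k" "j < k"
  shows "EQ k (\<lambda>x. x i * x j) r = (if i = j then 1 else r\<^sup>2)"
proof (cases "i = j")
  case True
  have "x i * x i = 1" if "x \<in> cube k" for x
    using cube_coord[OF that assms(1)] by auto
  then have "EQ k (\<lambda>x. x i * x j) r = EQ k (\<lambda>_. 1) r"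
    unfolding EQ_def using True by (intro sum.cong) simp_all
  then show ?thesis using True by (simp add: EQ_const)
next
  case False
  define h where "h l t = (if i = l then t else 1) * (if j = l then t else (1::real))" for l t
  have "x i * x j = (\<Prod>l<k. h l (x l))" for x
    using assms by (simp add: h_def prod.distrib prod.delta')
  then have "EQ k (\<lambda>x. x i * x j) r = (\<Prod>l<k. (1 + r) / 2 * h l 1 + (1 - r) / 2 * h l (-1))"
    by (simp add: EQ_prod)
  also have "\<dots> = (\<Prod>l<k. (if i = l then r else 1) * (if j = l then r else 1))"
    using False by (intro prod.cong) (auto simp: h_def field_simps)
  also have "\<dots> = r\<^sup>2"
    using assms by (simp add: prod.distrib prod.delta' power2_eq_square)
  finally show ?thesis using False by simp
qed

lemma EQ_quadpoly:
  "EQ k (quadpoly k c a b) r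
     = c + (\<Sum>i<k. a i) * r + (\<Sum>i<k. \<Sum>j<k. b i j * (if i = j then 1 else r\<^sup>2))"
proof -
  have "EQ k (quadpoly k c a b) r
      = c + (\<Sum>i<k. a i * EQ k (\<lambda>x. x i) r) + (\<Sum>i<k. \<Sum>j<k. b i j * EQ k (\<lambda>x. x i * x j) r)"
    unfolding quadpoly_def mult.assoc by (simp add: EQ_add EQ_sum EQ_cmult EQ_const)
  then show ?thesis
    by (simp add: EQ_coord EQ_coord_prod sum_distrib_right)
qed

lemma EQplus_eq_max:
  assumes "\<bar>r0\<bar> \<le> 1" "\<And>r. \<bar>r\<bar> \<le> 1 \<Longrightarrow> EQ k Q r \<le> EQ k Q r0"
  shows "EQplus k Q = EQ k Q r0"
  unfolding EQplus_def using assms by (intro cSup_eq_maximum) (auto simp: abs_le_iff)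

definition index_pairs :: "nat \<Rightarrow> (nat \<times> nat) set" where
  "index_pairs k = {(i, j). i < j \<and> j < k}"

lemma finite_index_pairs: "finite (index_pairs k)"
  by (rule finite_subset[of _ "{..<k} \<times> {..<k}"]) (auto simp: index_pairs_def)

lemma card_index_pairs_pos:
  assumes "2 \<le> k"
  shows "0 < card (index_pairs k)"
proof -
  have "(0, 1) \<in> index_pairs k"
    using assms by (simp add: index_pairs_def)
  then show ?thesis
    using finite_index_pairs card_gt_0_iff by blast
qed

lemma sum_index_pairs:
  "(\<Sum>i<k. \<Sum>j<k. if i < j then g i j else 0) = (\<Sum>(i, j)\<in>index_pairs k. g i j)"
proof -
  have "(\<Sum>i<k. \<Sum>j<k. if i < j then g i j else 0)
      = (\<Sum>(i, j)\<in>{..<k} \<times> {..<k}. if i < j then g i j else 0)"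
    by (simp add: sum.cartesian_product)
  also have "\<dots> = (\<Sum>(i, j)\<in>index_pairs k. g i j)"
    by (rule sum.mono_neutral_cong_right) (auto simp: index_pairs_def split: if_splits)
  finally show ?thesis .
qed

lemma sum_index_pairs_coord_prod_le:
  assumes "x \<in> cube k"
  shows "(\<Sum>(i, j)\<in>index_pairs k. x i * x j) \<le> real (card (index_pairs k))"
proof -
  have "x i * x j \<le> 1" if "(i, j) \<in> index_pairs k" for i j
    using that cube_coord[OF assms, of i] cube_coord[OF assms, of j]
    by (auto simp: index_pairs_def)
  then have "(\<Sum>(i, j)\<in>index_pairs k. x i * x j) \<le> (\<Sum>_\<in>index_pairs k. 1)"
    by (intro sum_mono) auto
  then show ?thesis by simp
qed

lemma
  fixes v :: "nat \<times> nat \<Rightarrow> real"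
  defines "b \<equiv> \<lambda>i j. if i < j then v (i, j) else 0"
  shows quadpoly_strict_upper:
      "quadpoly k c a b x = c + (\<Sum>i<k. a i * x i) + (\<Sum>(i, j)\<in>index_pairs k. v (i, j) * (x i * x j))"
    and EQ_quadpoly_strict_upper:
      "EQ k (quadpoly k c a b) r = c + (\<Sum>i<k. a i) * r + sum v (index_pairs k) * r\<^sup>2"
proof -
  have "(\<Sum>i<k. \<Sum>j<k. b i j * x i * x j) = (\<Sum>(i, j)\<in>index_pairs k. v (i, j) * (x i * x j))"
    unfolding b_def mult.assoc if_distrib[of "\<lambda>u. u * _"] mult_zero_left sum_index_pairs ..
  then show "quadpoly k c a b x = c + (\<Sum>i<k. a i * x i) + (\<Sum>(i, j)\<in>index_pairs k. v (i, j) * (x i * x j))"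
    by (simp add: quadpoly_def)
  have "(\<Sum>i<k. \<Sum>j<k. b i j * (if i = j then 1 else r\<^sup>2)) = (\<Sum>(i, j)\<in>index_pairs k. v (i, j) * r\<^sup>2)"
    unfolding b_def sum_index_pairs[symmetric] by (intro sum.cong) auto
  then show "EQ k (quadpoly k c a b) r = c + (\<Sum>i<k. a i) * r + sum v (index_pairs k) * r\<^sup>2"
    by (simp add: EQ_quadpoly sum_distrib_right case_prod_beta)
qed

lemma nonneg_if_nonneg_quadratic_at_right_0:
  fixes G H :: real
  assumes "\<And>t. 0 < t \<Longrightarrow> t \<le> 1 \<Longrightarrow> 0 \<le> t * G + t\<^sup>2 * H"
  shows "0 \<le> G"
proof (rule tendsto_lowerbound)
  show "((\<lambda>t. G + t * H) \<longlongrightarrow> G) (at_right 0)"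
    by (intro tendsto_eq_intros) auto
  have "0 \<le> G + t * H" if "0 < t" "t < 1" for t :: real
  proof -
    have "0 \<le> t * (G + t * H)"
      using assms[of t] that by (simp add: power2_eq_square algebra_simps)
    then show ?thesis using \<open>0 < t\<close> by (simp add: zero_le_mult_iff)
  qed
  then show "\<forall>\<^sub>F t in at_right 0. 0 \<le> G + t * H"
    using eventually_at_right_real[of 0 1] by (auto elim: eventually_mono)
qed simp

text \<open>A minimiser \<open>z\<^sub>0\<close> of \<open>\<Sum>j. (f j z)\<^sup>2\<close> over \<open>K\<close> yields the functional
  \<open>u = f \<cdot> z\<^sub>0\<close>: moving from \<open>z\<^sub>0\<close> towards any \<open>z\<close> cannot decrease the sum of squares,
  which to first order means \<open>u \<bullet> (f z - u) \<ge> 0\<close>.\<close>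
lemma compact_convex_image_separated_from_zero:
  fixes f :: "'j \<Rightarrow> 'a::topological_space \<Rightarrow> real"
  assumes "finite J" "compact K"
    and cont: "\<And>j. j \<in> J \<Longrightarrow> continuous_on K (f j)"
    and convex: "\<And>a b t. a \<in> K \<Longrightarrow> b \<in> K \<Longrightarrow> 0 \<le> t \<Longrightarrow> t \<le> 1 \<Longrightarrow>
                   \<exists>c\<in>K. \<forall>j\<in>J. f j c = (1 - t) * f j a + t * f j b"
    and nonzero: "\<And>z. z \<in> K \<Longrightarrow> \<exists>j\<in>J. f j z \<noteq> 0"
  obtains u F where "0 < F" "\<And>z. z \<in> K \<Longrightarrow> F \<le> (\<Sum>j\<in>J. u j * f j z)"
proof (cases "K = {}")
  case False
  have "continuous_on K (\<lambda>z. \<Sum>j\<in>J. (f j z)\<^sup>2)"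
    using cont by (intro continuous_intros) auto
  then obtain z0 where "z0 \<in> K" and min: "\<And>z. z \<in> K \<Longrightarrow> (\<Sum>j\<in>J. (f j z0)\<^sup>2) \<le> (\<Sum>j\<in>J. (f j z)\<^sup>2)"
    using continuous_attains_inf[OF \<open>compact K\<close> False] by blast
  define u where "u j = f j z0" for j
  define F where "F = (\<Sum>j\<in>J. (u j)\<^sup>2)"
  have "0 < F"
    using nonzero[OF \<open>z0 \<in> K\<close>] \<open>finite J\<close>
    by (auto simp: F_def u_def sum_nonneg_eq_0_iff less_le intro: sum_nonneg)
  moreover have "F \<le> (\<Sum>j\<in>J. u j * f j z)" if "z \<in> K" for z
  proof -
    have "0 \<le> 2 * (\<Sum>j\<in>J. u j * (f j z - u j))"
    proof (rule nonneg_if_nonneg_quadratic_at_right_0)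
      fix t :: real assume "0 < t" "t \<le> 1"
      then obtain c where "c \<in> K" and c: "\<And>j. j \<in> J \<Longrightarrow> f j c = (1 - t) * u j + t * f j z"
        using convex[OF \<open>z0 \<in> K\<close> \<open>z \<in> K\<close>, of t] by (auto simp: u_def)
      have "F \<le> (\<Sum>j\<in>J. ((1 - t) * u j + t * f j z)\<^sup>2)"
        using min[OF \<open>c \<in> K\<close>] c by (simp add: F_def u_def)
      also have "\<dots> = F + t * (2 * (\<Sum>j\<in>J. u j * (f j z - u j))) + t\<^sup>2 * (\<Sum>j\<in>J. (f j z - u j)\<^sup>2)"
        by (simp add: F_def sum_distrib_left power2_eq_square algebra_simps flip: sum.distrib)
      finally show "0 \<le> t * (2 * (\<Sum>j\<in>J. u j * (f j z - u j))) + t\<^sup>2 * (\<Sum>j\<in>J. (f j z - u j)\<^sup>2)"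
        by simp
    qed
    then show ?thesis
      by (simp add: F_def power2_eq_square right_diff_distrib sum_subtractf)
  qed
  ultimately show thesis by (rule that)
qed (rule that[of 1]; simp)

definition prob_weights :: "'a set \<Rightarrow> ('a \<Rightarrow> real) set" where
  "prob_weights S = {w. (\<forall>x. w x \<in> (if x \<in> S then {0..1} else {0})) \<and> sum w S = 1}"

text \<open>The pairs \<open>(m, c)\<close> of first and second moments of uniformly positively correlated
  distributions: with \<open>p = (1 + m) / 2\<close> and \<open>\<rho> = (1 + 2 m + c) / 4\<close>, the condition
  \<open>\<rho> \<ge> p\<^sup>2\<close> becomes \<open>c \<ge> m\<^sup>2\<close>.\<close>
definition corr_region :: "(real \<times> real) set" where
  "corr_region = {(m, c). m\<^sup>2 \<le> c \<and> c \<le> 1}"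

lemma prob_weightsD:
  assumes "w \<in> prob_weights S"
  shows "\<And>x. 0 \<le> w x" "\<And>x. x \<notin> S \<Longrightarrow> w x = 0" "sum w S = 1"
  using assms by (auto simp: prob_weights_def split: if_splits dest!: spec)

lemma compact_prob_weights: "compact (prob_weights S)"
proof -
  define B where "B x = (if x \<in> S then {0..1} else {0::real})" for x
  have "{w. \<forall>x. w x \<in> B x} = PiE UNIV B"
    by (auto simp: PiE_def Pi_def)
  moreover have "compactin (product_topology (\<lambda>_. euclidean) UNIV) (PiE UNIV B)"
    by (simp add: compactin_PiE B_def)
  ultimately have "compact {w. \<forall>x. w x \<in> B x}"
    by (simp add: euclidean_product_topology)
  moreover have "closed {w :: 'a \<Rightarrow> real. sum w S = 1}"
    by (intro closed_Collect_eq continuous_intros continuous_on_product_coordinates)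
  ultimately show ?thesis
    unfolding prob_weights_def B_def Collect_conj_eq by (rule compact_Int_closed)
qed

lemma prob_weights_convex_comb:
  assumes "w1 \<in> prob_weights S" "w2 \<in> prob_weights S" "0 \<le> t" "t \<le> 1"
  shows "(\<lambda>x. (1 - t) * w1 x + t * w2 x) \<in> prob_weights S"
proof -
  have "(1 - t) * w1 x + t * w2 x \<in> (if x \<in> S then {0..1} else {0})" for x
  proof -
    have "w1 x \<in> (if x \<in> S then {0..1} else {0})" "w2 x \<in> (if x \<in> S then {0..1} else {0})"
      using assms(1,2) by (auto simp: prob_weights_def)
    then show ?thesis
      using assms(3,4) convex_bound_le[of "w1 x" 1 "w2 x" "1 - t" t] by (auto split: if_splits)
  qed
  moreover have "(\<Sum>x\<in>S. (1 - t) * w1 x + t * w2 x) = 1"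
    using prob_weightsD(3)[OF assms(1)] prob_weightsD(3)[OF assms(2)]
    by (simp add: sum.distrib flip: sum_distrib_left)
  ultimately show ?thesis by (simp add: prob_weights_def)
qed

lemma compact_corr_region: "compact corr_region"
proof -
  have "m\<^sup>2 \<le> c \<Longrightarrow> c \<le> 1 \<Longrightarrow> -1 \<le> m \<and> m \<le> 1 \<and> 0 \<le> c" for m c :: real
    using abs_square_le_1[of m] order_trans[OF zero_le_power2] by (auto simp: abs_le_iff)
  then have "corr_region = ({-1..1} \<times> {0..1}) \<inter> {mc. (fst mc)\<^sup>2 \<le> snd mc \<and> snd mc \<le> 1}"
    by (auto simp: corr_region_def)
  also have "compact \<dots>"
    by (intro compact_Int_closed compact_Times compact_Icc closed_Collect_conj
        closed_Collect_le continuous_intros)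
  finally show ?thesis .
qed

lemma convex_corr_region: "convex corr_region"
proof (rule convexI)
  fix mc1 mc2 :: "real \<times> real" and s t :: real
  assume mc: "mc1 \<in> corr_region" "mc2 \<in> corr_region" and st: "0 \<le> s" "0 \<le> t" "s + t = 1"
  obtain m1 c1 m2 c2 where eq: "mc1 = (m1, c1)" "mc2 = (m2, c2)" by fastforce
  have "(s * m1 + t * m2)\<^sup>2 \<le> s * m1\<^sup>2 + t * m2\<^sup>2"
    using convex_power2 st by (auto simp: convex_on_def)
  also have "\<dots> \<le> s * c1 + t * c2"
    using mc st eq by (intro add_mono mult_left_mono) (auto simp: corr_region_def)
  finally show "s *\<^sub>R mc1 + t *\<^sub>R mc2 \<in> corr_region"
    using mc st eq convex_bound_le[of c1 1 c2 s t] by (auto simp: corr_region_def)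
qed

lemma
  assumes "w \<in> prob_weights S" "finite S"
  shows set_embed_pmf_prob_weights: "set_pmf (embed_pmf w) \<subseteq> S"
    and prob_embed_pmf_prob_weights:
      "measure_pmf.prob (embed_pmf w) A = (\<Sum>x\<in>S. w x * indicator A x)"
proof -
  note w = prob_weightsD[OF assms(1)]
  have "(\<integral>\<^sup>+x. ennreal (w x) \<partial>count_space UNIV) = 1"
    using w assms(2) by (subst nn_integral_count_space'[of S]) (auto simp: sum_ennreal)
  note pmf = pmf_embed_pmf[OF w(1) this] set_embed_pmf[OF w(1) this]
  show set: "set_pmf (embed_pmf w) \<subseteq> S"
    using pmf(2) w(2) by auto
  have "A \<inter> set_pmf (embed_pmf w) = (S \<inter> A) \<inter> set_pmf (embed_pmf w)"
    using set by auto
  then have "measure_pmf.prob (embed_pmf w) A = measure_pmf.prob (embed_pmf w) (S \<inter> A)"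
    by (metis measure_Int_set_pmf)
  also have "\<dots> = (\<Sum>x\<in>S \<inter> A. w x)"
    using assms(2) by (simp add: measure_measure_pmf_finite pmf(1))
  finally show "measure_pmf.prob (embed_pmf w) A = (\<Sum>x\<in>S. w x * indicator A x)"
    using assms(2) by (simp add: sum.inter_restrict indicator_def)
qed

lemma unif_pos_corr_embed_pmf:
  assumes S: "S \<subseteq> cube k" and w: "w \<in> prob_weights S" and mc: "(m, c) \<in> corr_region"
    and M1: "\<And>i. i < k \<Longrightarrow> (\<Sum>x\<in>S. w x * x i) = m"
    and M2: "\<And>i j. i < j \<Longrightarrow> j < k \<Longrightarrow> (\<Sum>x\<in>S. w x * (x i * x j)) = c"
  shows "unif_pos_corr k (embed_pmf w)"
proof -
  have fin: "finite S" using S finite_cube finite_subset by blast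
  note prob = prob_embed_pmf_prob_weights[OF w fin] and w1 = prob_weightsD(3)[OF w]
  have m: "\<bar>m\<bar> \<le> 1" "m\<^sup>2 \<le> c" "c \<le> 1"
    using mc abs_square_le_1[of m] by (auto simp: corr_region_def)
  have P1: "measure_pmf.prob (embed_pmf w) {x. x i = 1} = (1 + m) / 2" if "i < k" for i
  proof -
    have "indicator {x. x i = 1} x = (1 + x i) / 2" if "x \<in> S" for x
      using cube_coord[of x k i] S \<open>i < k\<close> that by (auto simp: indicator_def)
    then show ?thesis
      using M1[OF that] w1
      by (simp add: prob add_divide_distrib sum.distrib distrib_left flip: sum_divide_distrib)
  qed
  have P2: "measure_pmf.prob (embed_pmf w) {x. x i = 1 \<and> x j = 1} = (1 + 2 * m + c) / 4"
    if "i < j" "j < k" for i j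
  proof -
    have "indicator {x. x i = 1 \<and> x j = 1} x = (1 + x i + x j + x i * x j) / 4" if "x \<in> S" for x
      using cube_coord[of x k i] cube_coord[of x k j] S \<open>i < j\<close> \<open>j < k\<close> that
      by (auto simp: indicator_def)
    then show ?thesis
      using M1[of i] M1[of j] M2[OF that] w1 that
      by (simp add: prob add_divide_distrib sum.distrib distrib_left flip: sum_divide_distrib)
  qed
  have corr: "((1 + m) / 2)\<^sup>2 \<le> (1 + 2 * m + c) / 4"
    using m by (simp add: power2_eq_square field_simps)
  moreover have "(1 + m) / 2 \<in> {0..1}" "(1 + 2 * m + c) / 4 \<in> {0..1}"
    using m order_trans[OF zero_le_power2 corr] by auto
  moreover have "set_pmf (embed_pmf w) \<subseteq> cube k"
    using set_embed_pmf_prob_weights[OF w fin] S by blast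
  ultimately show ?thesis
    unfolding unif_pos_corr_def using P1 P2 by blast
qed

text \<open>With at most one coordinate there are no pairs, so a point mass is uniformly
  positively correlated.\<close>
lemma two_le_if_no_unif_pos_corr:
  assumes "x \<in> S" "S \<subseteq> cube k" "\<not> (\<exists>\<mu>. unif_pos_corr k \<mu> \<and> set_pmf \<mu> \<subseteq> S)"
  shows "2 \<le> k"
proof (rule ccontr)
  assume "\<not> 2 \<le> k"
  then have "i = 0" if "i < k" for i
    using that by simp
  then have "unif_pos_corr k (return_pmf x)"
    unfolding unif_pos_corr_def using assms(1,2)
    by (intro conjI exI[of _ "indicator {y. y 0 = 1} x"] exI[of _ 1]) (auto simp: indicator_def)
  then show False
    using assms(1,3) by auto
qed

text \<open>Index \<open>Inl i\<close> stands for the moment \<open>E x\<^sub>i\<close> and \<open>Inr (i, j)\<close> for \<open>E x\<^sub>i x\<^sub>j\<close>;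
  \<open>moment_gap S j (w, (m, c))\<close> compares the moment of the weights \<open>w\<close> with the value \<open>m\<close>
  resp. \<open>c\<close> prescribed for uniformly positively correlated distributions.\<close>
definition deg2_monomial :: "nat + nat \<times> nat \<Rightarrow> (nat \<Rightarrow> real) \<Rightarrow> real" where
  "deg2_monomial j x = (case j of Inl i \<Rightarrow> x i | Inr (i, i') \<Rightarrow> x i * x i')"

definition uniform_moment :: "nat + nat \<times> nat \<Rightarrow> real \<times> real \<Rightarrow> real" where
  "uniform_moment j mc = (case j of Inl _ \<Rightarrow> fst mc | Inr _ \<Rightarrow> snd mc)"

definition moment_gap ::
    "(nat \<Rightarrow> real) set \<Rightarrow> nat + nat \<times> nat \<Rightarrow> ((nat \<Rightarrow> real) \<Rightarrow> real) \<times> real \<times> real \<Rightarrow> real"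
  where "moment_gap S j z = (\<Sum>x\<in>S. fst z x * deg2_monomial j x) - uniform_moment j (snd z)"

lemma continuous_on_moment_gap: "continuous_on K (moment_gap S j)"
proof -
  have "continuous_on K (\<lambda>z. fst z x * deg2_monomial j x)" for x
    by (rule continuous_on_mult_right[OF continuous_on_product_then_coordinatewise[OF
          continuous_on_fst[OF continuous_on_id]]])
  moreover have "continuous_on K (\<lambda>z. uniform_moment j (snd z))"
    using continuous_on_fst[OF continuous_on_snd[OF continuous_on_id]]
      continuous_on_snd[OF continuous_on_snd[OF continuous_on_id]]
    by (cases j) (simp_all add: uniform_moment_def)
  ultimately show ?thesis
    unfolding moment_gap_def by (intro continuous_on_diff continuous_on_sum)
qed

lemma moment_gap_convex_comb:
  "moment_gap S j ((\<lambda>x. (1 - t) * w1 x + t * w2 x), (1 - t) *\<^sub>R mc1 + t *\<^sub>R mc2)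
     = (1 - t) * moment_gap S j (w1, mc1) + t * moment_gap S j (w2, mc2)"
proof -
  have "(\<Sum>x\<in>S. ((1 - t) * w1 x + t * w2 x) * deg2_monomial j x)
      = (1 - t) * (\<Sum>x\<in>S. w1 x * deg2_monomial j x) + t * (\<Sum>x\<in>S. w2 x * deg2_monomial j x)"
    by (simp add: distrib_right sum.distrib sum_distrib_left mult.assoc)
  moreover have "uniform_moment j ((1 - t) *\<^sub>R mc1 + t *\<^sub>R mc2)
      = (1 - t) * uniform_moment j mc1 + t * uniform_moment j mc2"
    by (simp add: uniform_moment_def split: sum.split)
  ultimately show ?thesis
    by (simp add: moment_gap_def algebra_simps)
qed

lemma moment_gap_point_mass:
  assumes "finite S" "x \<in> S"
  shows "moment_gap S j (indicator {x}, mc) = deg2_monomial j x - uniform_moment j mc"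
  using assms by (simp add: moment_gap_def indicator_def if_distrib sum.delta')

lemma unif_pos_corr_if_moment_gaps_vanish:
  assumes "S \<subseteq> cube k" "w \<in> prob_weights S" "(m, c) \<in> corr_region"
    and zero: "\<And>j. j \<in> {..<k} <+> index_pairs k \<Longrightarrow> moment_gap S j (w, (m, c)) = 0"
  shows "unif_pos_corr k (embed_pmf w)"
proof (rule unif_pos_corr_embed_pmf[OF assms(1-3)])
  show "(\<Sum>x\<in>S. w x * x i) = m" if "i < k" for i
    using zero[of "Inl i"] that by (auto simp: moment_gap_def deg2_monomial_def uniform_moment_def)
  show "(\<Sum>x\<in>S. w x * (x i * x j)) = c" if "i < j" "j < k" for i j
    using zero[of "Inr (i, j)"] that
    by (auto simp: index_pairs_def moment_gap_def deg2_monomial_def uniform_moment_def)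
qed

lemma separating_quadratic_form:
  assumes S: "S \<subseteq> cube k" and no_upc: "\<not> (\<exists>\<mu>. unif_pos_corr k \<mu> \<and> set_pmf \<mu> \<subseteq> S)"
  obtains a v F where
    "\<And>x m c. x \<in> S \<Longrightarrow> (m, c) \<in> corr_region \<Longrightarrow>
       (\<Sum>i<k. a i) * m + sum v (index_pairs k) * c + F
         \<le> (\<Sum>i<k. a i * x i) + (\<Sum>(i, j)\<in>index_pairs k. v (i, j) * (x i * x j))"
    "0 < F"
proof -
  define J where "J = {..<k} <+> index_pairs k"
  define K where "K = prob_weights S \<times> corr_region"
  have fin: "finite S"
    using S finite_cube finite_subset by blast
  have "finite J" "compact K"
    unfolding J_def K_def
    by (simp_all add: finite_index_pairs compact_Times compact_prob_weights compact_corr_region)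
  have convex: "\<exists>c\<in>K. \<forall>j\<in>J. moment_gap S j c = (1 - t) * moment_gap S j a + t * moment_gap S j b"
    if "a \<in> K" "b \<in> K" "0 \<le> t" "t \<le> 1" for a b t
  proof -
    obtain w1 mc1 w2 mc2 where ab: "a = (w1, mc1)" "b = (w2, mc2)" by (metis prod.collapse)
    have "w1 \<in> prob_weights S" "w2 \<in> prob_weights S" "mc1 \<in> corr_region" "mc2 \<in> corr_region"
      using that(1,2) ab by (simp_all add: K_def)
    then have mem: "((\<lambda>x. (1 - t) * w1 x + t * w2 x), (1 - t) *\<^sub>R mc1 + t *\<^sub>R mc2) \<in> K"
      using that(3,4) by (simp add: K_def prob_weights_convex_comb convexD[OF convex_corr_region])
    show ?thesis
      by (intro bexI[OF _ mem] ballI) (simp add: ab moment_gap_convex_comb)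
  qed
  have nonzero: "\<exists>j\<in>J. moment_gap S j z \<noteq> 0" if "z \<in> K" for z
  proof (rule ccontr)
    assume all_zero: "\<not> (\<exists>j\<in>J. moment_gap S j z \<noteq> 0)"
    obtain w m c where z: "z = (w, (m, c))" by (metis prod.collapse)
    have "w \<in> prob_weights S" "(m, c) \<in> corr_region"
      using that z by (simp_all add: K_def)
    moreover have "moment_gap S j (w, (m, c)) = 0" if "j \<in> {..<k} <+> index_pairs k" for j
      using all_zero that z by (simp add: J_def)
    ultimately have "unif_pos_corr k (embed_pmf w)"
      by (rule unif_pos_corr_if_moment_gaps_vanish[OF S])
    then show False
      using no_upc set_embed_pmf_prob_weights[OF \<open>w \<in> prob_weights S\<close> fin] by blast
  qed
  obtain u F where "0 < F" and sep: "\<And>z. z \<in> K \<Longrightarrow> F \<le> (\<Sum>j\<in>J. u j * moment_gap S j z)"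
    using compact_convex_image_separated_from_zero[OF \<open>finite J\<close> \<open>compact K\<close>
        continuous_on_moment_gap convex nonzero]
    by blast
  show thesis
  proof (rule that[of "\<lambda>i. u (Inl i)" "\<lambda>p. u (Inr p)" F])
    fix x m c assume "x \<in> S" "(m, c) \<in> corr_region"
    moreover have "indicator {x} \<in> prob_weights S"
      using fin \<open>x \<in> S\<close> by (auto simp: prob_weights_def indicator_def)
    ultimately have "F \<le> (\<Sum>j\<in>J. u j * (deg2_monomial j x - uniform_moment j (m, c)))"
      using sep[of "(indicator {x}, (m, c))"] by (simp add: K_def moment_gap_point_mass fin)
    then show "(\<Sum>i<k. u (Inl i)) * m + (\<Sum>p\<in>index_pairs k. u (Inr p)) * c + F
        \<le> (\<Sum>i<k. u (Inl i) * x i) + (\<Sum>(i, j)\<in>index_pairs k. u (Inr (i, j)) * (x i * x j))"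
      by (simp add: J_def sum.Plus finite_index_pairs deg2_monomial_def uniform_moment_def
          case_prod_beta algebra_simps sum_subtractf sum_distrib_left sum_distrib_right)
  qed fact
qed

lemma concave_quadratic_le_vertex:
  fixes U y r :: real
  assumes "0 < y"
  shows "U * r - y * r\<^sup>2 \<le> U * (U / (2 * y)) - y * (U / (2 * y))\<^sup>2"
proof -
  have "U * (U / (2 * y)) - y * (U / (2 * y))\<^sup>2 - (U * r - y * r\<^sup>2) = y * (r - U / (2 * y))\<^sup>2"
    using assms by (simp add: field_simps power2_eq_square)
  then show ?thesis
    using assms by (smt (verit) zero_le_power2 mult_nonneg_nonneg)
qed

text \<open>If \<open>V\<close> is very negative, the vertex \<open>-U / (2 V)\<close> already lies in \<open>(-1, 1)\<close> and
  \<open>\<sigma> = 0\<close>; otherwise \<open>\<sigma>\<close> is chosen so that \<open>V - \<sigma> = -(\<bar>U\<bar> + F) / 2\<close>.\<close>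
lemma interior_peak_below_levels:
  fixes U V F :: real
  assumes "0 < F"
  obtains \<sigma> r0 where "0 \<le> \<sigma>" "\<bar>r0\<bar> < 1"
    "\<And>r. U * r + (V - \<sigma>) * r\<^sup>2 \<le> U * r0 + (V - \<sigma>) * r0\<^sup>2"
    "\<And>l. (\<And>m c. (m, c) \<in> corr_region \<Longrightarrow> U * m + V * c + F \<le> l) \<Longrightarrow>
       U * r0 + (V - \<sigma>) * r0\<^sup>2 + \<sigma> < l"
proof (cases "2 * V + \<bar>U\<bar> < 0")
  case True
  define r0 where "r0 = U / (2 * - V)"
  have "\<bar>r0\<bar> = \<bar>U\<bar> / (2 * - V)"
    using True by (simp add: r0_def abs_divide)
  also have "\<dots> < 1"
    using True by (subst pos_divide_less_eq) linarith+
  finally have "\<bar>r0\<bar> < 1" .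
  moreover have "U * r + V * r\<^sup>2 \<le> U * r0 + V * r0\<^sup>2" for r
    using concave_quadratic_le_vertex[of "- V" U r] True by (simp add: r0_def)
  moreover have "U * r0 + V * r0\<^sup>2 < l"
    if "\<And>m c. (m, c) \<in> corr_region \<Longrightarrow> U * m + V * c + F \<le> l" for l
    using that[of r0 "r0\<^sup>2"] \<open>\<bar>r0\<bar> < 1\<close> assms
    by (simp add: corr_region_def abs_square_le_1 less_imp_le)
  ultimately show thesis
    by (intro that[of 0 r0]) simp_all
next
  case False
  define y where "y = (\<bar>U\<bar> + F) / 2"
  define r0 where "r0 = U / (2 * y)"
  have y: "0 < y" "\<bar>U\<bar> < 2 * y" "2 * y = \<bar>U\<bar> + F"
    using assms by (simp_all add: y_def)
  have "\<bar>r0\<bar> < 1"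
    using y by (simp add: r0_def abs_divide divide_less_eq)
  moreover have "U * r - y * r\<^sup>2 \<le> U * r0 - y * r0\<^sup>2" for r
    using concave_quadratic_le_vertex[OF y(1), of U r] by (simp add: r0_def)
  moreover have "U * r0 - y * r0\<^sup>2 + (y + V) < l"
    if "\<And>m c. (m, c) \<in> corr_region \<Longrightarrow> U * m + V * c + F \<le> l" for l
  proof -
    have "\<bar>U\<bar> + V + F \<le> l"
      using that[of "sgn U" 1] by (simp add: corr_region_def abs_sgn power2_eq_square)
    moreover have "U * r0 - y * r0\<^sup>2 = y * r0\<^sup>2"
      using y(1) by (simp add: r0_def power2_eq_square field_simps)
    moreover have "y * r0\<^sup>2 < y"
      using y(1) \<open>\<bar>r0\<bar> < 1\<close> by (simp add: abs_square_less_1)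
    ultimately show ?thesis
      using y(3) by linarith
  qed
  moreover have "0 \<le> y + V"
    using False assms y(3) by linarith
  ultimately show thesis
    by (intro that[of "y + V" r0]) simp_all
qed

text \<open>Subtracting \<open>\<sigma> / N\<close> from each of the \<open>N\<close> pair coefficients lowers the quadratic
  coefficient of \<open>E\<^sub>Q\<close> by \<open>\<sigma>\<close>, but lowers \<open>Q\<close> on the cube by at most \<open>\<sigma>\<close>.\<close>
lemma quadratic_certificate:
  assumes S: "S \<subseteq> cube k" and "2 \<le> k" "0 < F"
    and sep: "\<And>x m c. x \<in> S \<Longrightarrow> (m, c) \<in> corr_region \<Longrightarrow>
       (\<Sum>i<k. a i) * m + sum v (index_pairs k) * c + F
         \<le> (\<Sum>i<k. a i * x i) + (\<Sum>(i, j)\<in>index_pairs k. v (i, j) * (x i * x j))"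
  shows "\<exists>c a b. (\<forall>x\<in>S. EQplus k (quadpoly k c a b) < quadpoly k c a b x) \<and>
           (\<exists>r. \<bar>r\<bar> < 1 \<and> EQ k (quadpoly k c a b) r = EQplus k (quadpoly k c a b))"
proof -
  define U where "U = (\<Sum>i<k. a i)"
  define V where "V = sum v (index_pairs k)"
  define N where "N = real (card (index_pairs k))"
  obtain \<sigma> r0 where "0 \<le> \<sigma>" "\<bar>r0\<bar> < 1"
    and peak: "\<And>r. U * r + (V - \<sigma>) * r\<^sup>2 \<le> U * r0 + (V - \<sigma>) * r0\<^sup>2"
    and below: "\<And>l. (\<And>m c. (m, c) \<in> corr_region \<Longrightarrow> U * m + V * c + F \<le> l) \<Longrightarrow>
                  U * r0 + (V - \<sigma>) * r0\<^sup>2 + \<sigma> < l"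
    using interior_peak_below_levels[OF \<open>0 < F\<close>] by metis
  define Q where "Q = quadpoly k 0 a (\<lambda>i j. if i < j then v (i, j) - \<sigma> / N else 0)"
  have "0 < N"
    using card_index_pairs_pos[OF \<open>2 \<le> k\<close>] by (simp add: N_def)
  have EQ_Q: "EQ k Q r = U * r + (V - \<sigma>) * r\<^sup>2" for r
    using \<open>0 < N\<close> unfolding Q_def EQ_quadpoly_strict_upper[where v = "\<lambda>p. v p - \<sigma> / N"]
    by (simp add: U_def V_def N_def sum_subtractf)
  have "EQplus k Q = EQ k Q r0"
    using \<open>\<bar>r0\<bar> < 1\<close> peak by (intro EQplus_eq_max) (simp_all add: EQ_Q)
  moreover have "EQ k Q r0 < Q x" if "x \<in> S" for x
  proof -
    have "EQ k Q r0 + \<sigma> < (\<Sum>i<k. a i * x i) + (\<Sum>(i, j)\<in>index_pairs k. v (i, j) * (x i * x j))"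
      using below sep[OF that] by (simp add: EQ_Q U_def V_def)
    also have "\<dots> \<le> Q x + \<sigma> / N * (\<Sum>(i, j)\<in>index_pairs k. x i * x j)"
      unfolding Q_def quadpoly_strict_upper[where v = "\<lambda>p. v p - \<sigma> / N"]
      by (simp add: case_prod_beta left_diff_distrib sum_subtractf sum_distrib_left)
    also have "\<dots> \<le> Q x + \<sigma>"
      using sum_index_pairs_coord_prod_le[of x k] S that \<open>0 \<le> \<sigma>\<close> \<open>0 < N\<close>
      by (auto simp: N_def field_simps intro: mult_left_mono)
    finally show ?thesis by simp
  qed
  ultimately have "(\<forall>x\<in>S. EQplus k Q < Q x) \<and> (\<exists>r. \<bar>r\<bar> < 1 \<and> EQ k Q r = EQplus k Q)"
    using \<open>\<bar>r0\<bar> < 1\<close> by auto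
  then show ?thesis
    unfolding Q_def by blast
qed

theorem theorem6p4:
  fixes k :: nat and P :: "(nat \<Rightarrow> real) \<Rightarrow> bool"
  assumes "\<not> (\<exists>\<mu>. unif_pos_corr k \<mu> \<and> set_pmf \<mu> \<subseteq> {x. P x})"
  shows "\<exists>c a b. (\<forall>x\<in>cube k. P x \<longrightarrow> quadpoly k c a b x > EQplus k (quadpoly k c a b)) \<and>
           (\<exists>r. \<bar>r\<bar> < 1 \<and> EQ k (quadpoly k c a b) r = EQplus k (quadpoly k c a b))"
proof -
  define S where "S = {x \<in> cube k. P x}"
  have S: "S \<subseteq> cube k"
    by (auto simp: S_def)
  have no_upc: "\<not> (\<exists>\<mu>. unif_pos_corr k \<mu> \<and> set_pmf \<mu> \<subseteq> S)"
    using assms unfolding S_def by blast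
  have "\<exists>c a b. (\<forall>x\<in>S. EQplus k (quadpoly k c a b) < quadpoly k c a b x) \<and>
          (\<exists>r. \<bar>r\<bar> < 1 \<and> EQ k (quadpoly k c a b) r = EQplus k (quadpoly k c a b))"
  proof (cases "S = {}")
    case True
    have "quadpoly k 0 (\<lambda>_. 0) (\<lambda>_ _. 0) = (\<lambda>_. 0)"
      by (simp add: fun_eq_iff quadpoly_def)
    then have "EQplus k (quadpoly k 0 (\<lambda>_. 0) (\<lambda>_ _. 0)) = EQ k (quadpoly k 0 (\<lambda>_. 0) (\<lambda>_ _. 0)) 0"
      by (intro EQplus_eq_max) (simp_all add: EQ_const)
    then show ?thesis
      using True by (intro exI[of _ 0] exI[of _ "\<lambda>_. 0"] exI[of _ "\<lambda>_ _. 0"] conjI)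
        (auto intro!: exI[of _ 0])
  next
    case False
    then obtain x where "x \<in> S" by blast
    then have "2 \<le> k"
      using S no_upc by (rule two_le_if_no_unif_pos_corr)
    show ?thesis
      by (rule separating_quadratic_form[OF S no_upc], rule quadratic_certificate[OF S \<open>2 \<le> k\<close>])
  qed
  then show ?thesis
    by (auto simp: S_def)
qed

end
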